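(* Let $\mathcal{K}=\{1,\ldots,K\}$ be a set of users, and for each $k\in\mathcal{K}$ let $\gamma_k:\mathbb{R}_{>0}^K\to\mathbb{R}_{>0}$ be the uplink SINDR of user $k$ as a function of the transmit power vector $\boldsymbol{\rho}=[\rho_1,\ldots,\rho_K]^{\mathrm{T}}$, for fixed receivers. Suppose there exist power vectors $\boldsymbol{\rho}\succeq\boldsymbol{\rho}'$ (componentwise $\ge$, with $\boldsymbol{\rho}'$ having positive entries) such that $\gamma_k(\boldsymbol{\rho})<\gamma_k(\boldsymbol{\rho}')$ for all $k\in\mathcal{K}$. Then the transmit powers are in the quantization-distortion-dominated region of the non-monotonic SINDR, i.e., the SINDR functions cannot be of the unquantized form $\gamma_k(\boldsymbol{\rho})=G_k(\rho_k)/I_k(\boldsymbol{\rho})$ with $G_k(\rho_k)=g_k\rho_k$ ($g_k>0$) and $I_k$ a standard interference function; equivalently, for any such unquantized-form SINR functions and any $\boldsymbol{\rho}\succeq\boldsymbol{\rho}'$ there is at least one $k$ with $\gamma_k(\boldsymbol{\rho})\ge\gamma_k(\boldsymbol{\rho}')$.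
   Context: A standard interference function $I:\mathbb{R}_{\ge 0}^K\to\mathbb{R}_{>0}$ (Yates) satisfies positivity $I(\boldsymbol{\rho})>0$, monotonicity ($\boldsymbol{\rho}\succeq\boldsymbol{\rho}'\Rightarrow I(\boldsymbol{\rho})\ge I(\boldsymbol{\rho}')$) and scalability ($a>1\Rightarrow aI(\boldsymbol{\rho})>I(a\boldsymbol{\rho})$). In an unquantized system with fixed receivers, the SINR of user $k$ has the form (signal power linear in $\rho_k$)/(interference-plus-noise given by a standard interference function). The SINDR of user $k$ is called non-monotonic due to quantization distortion (QD), produced by 1-bit ADCs at the receivers, if for fixed interference and noise there is $\rho_k>\rho_k'$ with $\gamma_k(\rho_k)<\gamma_k(\rho_k')$; the "QD-dominated region" refers to transmit powers where the SINDR exhibits such non-monotonic behavior, which cannot occur for unquantized-form SINRs. *)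

theory Defs
  imports Complex_Main
begin

text \<open>Power vectors are functions from a finite user index type 'k to real.
  Yates' standard interference function on the nonnegative orthant.\<close>

definition standard_interference :: "(('k \<Rightarrow> real) \<Rightarrow> real) \<Rightarrow> bool" where
  "standard_interference I \<longleftrightarrow>
     (\<forall>\<rho>. (\<forall>j. 0 \<le> \<rho> j) \<longrightarrow> 0 < I \<rho>) \<and>
     (\<forall>\<rho> \<rho>'. (\<forall>j. 0 \<le> \<rho>' j) \<and> (\<forall>j. \<rho>' j \<le> \<rho> j) \<longrightarrow> I \<rho>' \<le> I \<rho>) \<and>
     (\<forall>\<rho> (a::real). (\<forall>j. 0 \<le> \<rho> j) \<and> 1 < a \<longrightarrow> I (\<lambda>j. a * \<rho> j) < a * I \<rho>)"

definition unquantized_sinr ::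
  "('k \<Rightarrow> real) \<Rightarrow> ('k \<Rightarrow> ('k \<Rightarrow> real) \<Rightarrow> real) \<Rightarrow> 'k \<Rightarrow> ('k \<Rightarrow> real) \<Rightarrow> real" where
  "unquantized_sinr g I k \<rho> = g k * \<rho> k / I k \<rho>"

end

theory Submission
  imports Defs
begin

text \<open>Let \<open>k\<close> be a user maximising the power ratio \<open>a = \<rho> k / \<rho>' k\<close>, so \<open>a \<ge> 1\<close> and
  \<open>\<rho> \<le> a \<rho>'\<close> componentwise. Monotonicity and scalability of \<open>I k\<close> give
  \<open>I k \<rho> \<le> I k (a \<rho>') \<le> a I k \<rho>'\<close>, whereas the signal power of user \<open>k\<close> grows exactly by
  the factor \<open>a\<close>; hence the SINR of user \<open>k\<close> does not decrease.\<close>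

lemma standard_interference_pos:
  assumes "standard_interference I" and "\<And>j. 0 \<le> \<rho> j"
  shows "0 < I \<rho>"
  using assms unfolding standard_interference_def by blast

lemma standard_interference_mono:
  assumes "standard_interference I" and "\<And>j. 0 \<le> \<rho>' j" and "\<And>j. \<rho>' j \<le> \<rho> j"
  shows "I \<rho>' \<le> I \<rho>"
  using assms unfolding standard_interference_def by blast

lemma standard_interference_scale_le:
  assumes "standard_interference I" and "\<And>j. 0 \<le> \<rho> j" and "1 \<le> a"
  shows "I (\<lambda>j. a * \<rho> j) \<le> a * I \<rho>"
proof (cases "a = 1")
  case False
  with assms have "I (\<lambda>j. a * \<rho> j) < a * I \<rho>"
    unfolding standard_interference_def by auto
  then show ?thesis by simp
qed simp

lemma standard_interference_le_scaled:
  assumes "standard_interference I" and "\<And>j. 0 \<le> \<rho> j" and "\<And>j. 0 \<le> \<rho>' j"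
    and "\<And>j. \<rho> j \<le> a * \<rho>' j" and "1 \<le> a"
  shows "I \<rho> \<le> a * I \<rho>'"
proof -
  have "I \<rho> \<le> I (\<lambda>j. a * \<rho>' j)"
    using assms(1,2,4) by (rule standard_interference_mono)
  also have "\<dots> \<le> a * I \<rho>'"
    using assms(1,3,5) by (rule standard_interference_scale_le)
  finally show ?thesis .
qed

lemma unquantized_sinr_le_if_scaled_user:
  assumes "0 \<le> g k" and "standard_interference (I k)"
    and "\<And>j. 0 \<le> \<rho> j" and "\<And>j. 0 \<le> \<rho>' j"
    and "\<And>j. \<rho> j \<le> a * \<rho>' j" and "\<rho> k = a * \<rho>' k" and "1 \<le> a"
  shows "unquantized_sinr g I k \<rho>' \<le> unquantized_sinr g I k \<rho>"
proof -
  have I_pos: "0 < I k \<rho>"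
    using assms(2,3) by (rule standard_interference_pos)
  have I_le: "I k \<rho> \<le> a * I k \<rho>'"
    using assms(2-5,7) by (rule standard_interference_le_scaled)
  have "unquantized_sinr g I k \<rho>' = g k * (a * \<rho>' k) / (a * I k \<rho>')"
    using \<open>1 \<le> a\<close> by (simp add: unquantized_sinr_def)
  also have "\<dots> \<le> g k * (a * \<rho>' k) / I k \<rho>"
    using I_le I_pos assms(1,4,7) by (intro divide_left_mono) auto
  also have "\<dots> = unquantized_sinr g I k \<rho>"
    using assms(6) by (simp add: unquantized_sinr_def)
  finally show ?thesis .
qed

lemma ex_max_ratio:
  fixes \<rho> \<rho>' :: "'k::finite \<Rightarrow> real"
  assumes "\<And>j. 0 < \<rho>' j"
  shows "\<exists>k. \<forall>j. \<rho> j \<le> \<rho> k / \<rho>' k * \<rho>' j"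
proof -
  define r where "r j = \<rho> j / \<rho>' j" for j
  obtain k where "r k = Max (range r)"
    by (metis Max_in finite UNIV_not_empty empty_is_image finite_imageI imageE)
  then have "r j \<le> r k" for j by simp
  with assms show ?thesis
    by (intro exI[of _ k]) (simp add: r_def pos_divide_le_eq)
qed

theorem theorem1:
  fixes g :: "'k::finite \<Rightarrow> real"
    and I :: "'k \<Rightarrow> ('k \<Rightarrow> real) \<Rightarrow> real"
    and \<rho> \<rho>' :: "'k \<Rightarrow> real"
  assumes "\<And>k. 0 < g k"
    and "\<And>k. standard_interference (I k)"
    and "\<And>k. 0 < \<rho>' k"
    and "\<And>k. \<rho>' k \<le> \<rho> k"
  shows "\<exists>k. unquantized_sinr g I k \<rho>' \<le> unquantized_sinr g I k \<rho>"
proof -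
  obtain k where dom: "\<And>j. \<rho> j \<le> \<rho> k / \<rho>' k * \<rho>' j"
    using ex_max_ratio assms(3) by blast
  have "1 \<le> \<rho> k / \<rho>' k"
    using assms(3,4) by simp
  moreover have "\<rho> k = \<rho> k / \<rho>' k * \<rho>' k"
    using assms(3)[of k] by simp
  moreover have "0 \<le> \<rho>' j" "0 \<le> \<rho> j" for j
    using assms(3,4)[of j] by linarith+
  ultimately have "unquantized_sinr g I k \<rho>' \<le> unquantized_sinr g I k \<rho>"
    using assms(1,2) dom by (intro unquantized_sinr_le_if_scaled_user) (auto simp: less_imp_le)
  then show ?thesis ..
qed

end
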